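(* Let $a<b$ and let $U_n\subset C^n([a,b],\mathbb{K})$ (with $\mathbb{K}=\mathbb{R}$ or $\mathbb{C}$) be a $\mathbb{K}$-linear subspace of dimension $n+1$ which possesses a non-negative Bernstein basis $p_{n,0},\dots,p_{n,n}$ for $\{a,b\}$. Let $f_0\in U_n$ be strictly positive on $[a,b]$, and let $f_1\in U_n$ be such that $f_1/f_0$ is strictly increasing on $[a,b]$. Assume that $D_{f_0}U_n$ possesses a non-negative Bernstein basis $q_{n-1,0},\dots,q_{n-1,n-1}$ for $\{a,b\}$. If the coefficients $w_0,\dots,w_{n-1}$ defined by $$\frac{d}{dx}\frac{f_1}{f_0}=\sum_{k=0}^{n-1}w_k\,q_{n-1,k}$$ are all non-negative, then there exist points $t_0,\dots,t_n\in[a,b]$ with $t_0=a$ and $t_n=b$ and positive numbers $\alpha_0,\dots,\alpha_n$ such that the operator $B_n:C[a,b]\to U_n$, $B_nf=\sum_{k=0}^n f(t_k)\alpha_k p_{n,k}$, satisfies $B_nf_0=f_0$ and $B_nf_1=f_1$.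
   Context: A function $f\in C^m([a,b],\mathbb{K})$ has a zero of order (multiplicity) $k$ at a point $c\in[a,b]$ if $f(c)=f'(c)=\dots=f^{(k-1)}(c)=0$ and $f^{(k)}(c)\neq0$ (one-sided derivatives at endpoints). If $V\subset C^{m}([a,b],\mathbb{K})$ is a linear space of dimension $m+1$, a system $p_{m,0},\dots,p_{m,m}$ in $V$ is a Bernstein basis for $\{a,b\}$ if each $p_{m,k}$ has a zero of order exactly $k$ at $a$ and a zero of order exactly $m-k$ at $b$ (it is automatically a basis of $V$). It is non-negative if every $p_{m,k}$ is real-valued and $p_{m,k}(x)\ge 0$ for all $x\in[a,b]$. For a strictly positive (real-valued, $>0$) $f_0\in U_n$, the space of derivatives modulo $f_0$ is $D_{f_0}U_n=\{\frac{d}{dx}(f/f_0): f\in U_n\}$, an $n$-dimensional subspace of $C^{n-1}([a,b],\mathbb{K})$. *)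

theory Defs
  imports "HOL-Analysis.Analysis" "HOL-Library.Function_Algebras"
begin

text \<open>Functions on [a,b] are represented as functions real \<Rightarrow> 'k that vanish outside [a,b]
  (extensional convention).  Scalars 'k: a real normed field (i.e. R or C).\<close>

definition ext_on :: "real \<Rightarrow> real \<Rightarrow> (real \<Rightarrow> 'k::zero) \<Rightarrow> real \<Rightarrow> 'k" where
  "ext_on a b g = (\<lambda>x. if x \<in> {a..b} then g x else 0)"

definition fscale :: "'k::real_normed_field \<Rightarrow> (real \<Rightarrow> 'k) \<Rightarrow> real \<Rightarrow> 'k" where
  "fscale c f = (\<lambda>x. c * f x)"

fun nderiv :: "nat \<Rightarrow> real \<Rightarrow> real \<Rightarrow> (real \<Rightarrow> 'k::real_normed_vector) \<Rightarrow> real \<Rightarrow> 'k" where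
  "nderiv 0 a b f = f"
| "nderiv (Suc k) a b f = (\<lambda>x. vector_derivative (nderiv k a b f) (at x within {a..b}))"

definition Cn :: "nat \<Rightarrow> real \<Rightarrow> real \<Rightarrow> (real \<Rightarrow> 'k::real_normed_vector) set" where
  "Cn m a b = {f. (\<forall>x. x \<notin> {a..b} \<longrightarrow> f x = 0)
     \<and> (\<forall>k<m. \<forall>x\<in>{a..b}. (nderiv k a b f has_vector_derivative nderiv (Suc k) a b f x) (at x within {a..b}))
     \<and> continuous_on {a..b} (nderiv m a b f)}"

definition zero_order :: "real \<Rightarrow> real \<Rightarrow> (real \<Rightarrow> 'k::real_normed_vector) \<Rightarrow> real \<Rightarrow> nat \<Rightarrow> bool" where
  "zero_order a b f c k \<longleftrightarrow> (\<forall>j<k. nderiv j a b f c = 0) \<and> nderiv k a b f c \<noteq> 0"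

definition bernstein_basis :: "real \<Rightarrow> real \<Rightarrow> nat \<Rightarrow> (nat \<Rightarrow> real \<Rightarrow> 'k::real_normed_vector) \<Rightarrow> bool" where
  "bernstein_basis a b m p \<longleftrightarrow> (\<forall>k\<le>m. zero_order a b (p k) a k \<and> zero_order a b (p k) b (m - k))"

definition nonneg_system :: "real \<Rightarrow> real \<Rightarrow> nat \<Rightarrow> (nat \<Rightarrow> real \<Rightarrow> 'k::real_normed_algebra_1) \<Rightarrow> bool" where
  "nonneg_system a b m p \<longleftrightarrow> (\<forall>k\<le>m. \<forall>x\<in>{a..b}. \<exists>r::real. r \<ge> 0 \<and> p k x = of_real r)"

definition Dmod :: "real \<Rightarrow> real \<Rightarrow> (real \<Rightarrow> 'k::real_normed_field) \<Rightarrow> (real \<Rightarrow> 'k) set \<Rightarrow> (real \<Rightarrow> 'k) set" where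
  "Dmod a b f0 U = {ext_on a b (nderiv 1 a b (\<lambda>x. f x / f0 x)) | f. f \<in> U}"

end

theory Submission
  imports Defs
begin

lemma nderiv_Suc_inner: "nderiv (Suc j) a b f = nderiv j a b (nderiv 1 a b f)"
  by (induction j) simp_all

lemma nderiv_nderiv_Suc_0 [simp]: "nderiv j a b (nderiv (Suc 0) a b f) = nderiv (Suc j) a b f"
  using nderiv_Suc_inner[of j a b f] by (simp only: One_nat_def)

declare nderiv.simps(2) [simp del]

lemma nderiv_cong:
  assumes "\<forall>y\<in>{a..b}. f y = g y" and "x \<in> {a..b}"
  shows "nderiv j a b f x = nderiv j a b g x"
  using assms(2)
proof (induction j arbitrary: x)
  case (Suc j)
  then show ?case
    unfolding nderiv.simps(2)
    by (intro vector_derivative_cong_eq always_eventually) auto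
qed (use assms in simp)

lemma nderiv_1_eqI:
  assumes "a < b" "x \<in> {a..b}" "(f has_vector_derivative v) (at x within {a..b})"
  shows "nderiv 1 a b f x = v"
  using vector_derivative_within_cbox[of a b x f v] assms by (simp add: nderiv.simps(2))

text \<open>The smoothness part of \<open>Cn\<close>, without the requirement of vanishing outside \<open>[a,b]\<close>, so that
  it is closed under products and quotients.\<close>
definition Ck :: "nat \<Rightarrow> real \<Rightarrow> real \<Rightarrow> (real \<Rightarrow> 'k::real_normed_vector) \<Rightarrow> bool" where
  "Ck m a b f \<longleftrightarrow>
     (\<forall>j<m. \<forall>x\<in>{a..b}. (nderiv j a b f has_vector_derivative nderiv (Suc j) a b f x) (at x within {a..b}))
     \<and> continuous_on {a..b} (nderiv m a b f)"

lemma Cn_imp_Ck: "f \<in> Cn m a b \<Longrightarrow> Ck m a b f"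
  by (simp add: Cn_def Ck_def)

lemma Ck_0: "Ck 0 a b f \<longleftrightarrow> continuous_on {a..b} f"
  by (simp add: Ck_def)

lemma Ck_Suc:
  "Ck (Suc m) a b f \<longleftrightarrow>
     (\<forall>x\<in>{a..b}. (f has_vector_derivative nderiv 1 a b f x) (at x within {a..b})) \<and> Ck m a b (nderiv 1 a b f)"
  unfolding Ck_def nderiv_Suc_inner All_less_Suc2 by simp

lemma Ck_cong:
  assumes "\<forall>x\<in>{a..b}. f x = g x"
  shows "Ck m a b f \<longleftrightarrow> Ck m a b g"
proof -
  have eq: "nderiv j a b f x = nderiv j a b g x" if "x \<in> {a..b}" for j x
    using nderiv_cong[OF assms that] .
  have "(nderiv j a b f has_vector_derivative v) (at x within {a..b}) \<longleftrightarrow>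
        (nderiv j a b g has_vector_derivative v) (at x within {a..b})" if "x \<in> {a..b}" for j x v
    using eq that by (intro has_vector_derivative_cong_ev always_eventually) auto
  moreover have "continuous_on {a..b} (nderiv m a b f) \<longleftrightarrow> continuous_on {a..b} (nderiv m a b g)"
    using eq by (intro continuous_on_cong) auto
  ultimately show ?thesis
    unfolding Ck_def by (auto simp: eq)
qed

lemma Ck_SucI:
  assumes "a < b" and "\<And>x. x \<in> {a..b} \<Longrightarrow> (f has_vector_derivative f' x) (at x within {a..b})"
    and "Ck m a b f'"
  shows "Ck (Suc m) a b f"
proof -
  have "\<forall>x\<in>{a..b}. nderiv 1 a b f x = f' x"
    using nderiv_1_eqI[OF assms(1)] assms(2) by blast
  then show ?thesis
    unfolding Ck_Suc using assms(2,3) Ck_cong by fastforce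
qed

lemma Ck_SucD:
  assumes "Ck (Suc m) a b f"
  shows "\<And>x. x \<in> {a..b} \<Longrightarrow> (f has_vector_derivative nderiv 1 a b f x) (at x within {a..b})"
    and "Ck m a b (nderiv 1 a b f)"
  using assms unfolding Ck_Suc by auto

lemma Ck_Suc_imp_Ck: "Ck (Suc m) a b f \<Longrightarrow> Ck m a b f"
  unfolding Ck_def
  using continuous_on_vector_derivative[of "{a..b}" "nderiv m a b f" "nderiv (Suc m) a b f"] by auto

lemma Ck_mono: "Ck m a b f \<Longrightarrow> j \<le> m \<Longrightarrow> Ck j a b f"
  by (induction m) (auto simp: le_Suc_eq dest: Ck_Suc_imp_Ck)

context
  fixes a b :: real
  assumes ab: "a < b"
begin

lemma Ck_add: "Ck m a b f \<Longrightarrow> Ck m a b g \<Longrightarrow> Ck m a b (\<lambda>x. f x + g x :: 'k::real_normed_vector)"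
proof (induction m arbitrary: f g)
  case (Suc m)
  show ?case
    by (rule Ck_SucI[OF ab, where f'="\<lambda>x. nderiv 1 a b f x + nderiv 1 a b g x"])
      (use Ck_SucD[OF Suc.prems(1)] Ck_SucD[OF Suc.prems(2)] in \<open>auto intro: has_vector_derivative_add Suc.IH\<close>)
qed (simp add: Ck_0 continuous_on_add)

lemma Ck_cmult: "Ck m a b f \<Longrightarrow> Ck m a b (\<lambda>x. c * f x :: 'k::real_normed_field)"
proof (induction m arbitrary: f)
  case (Suc m)
  show ?case
    by (rule Ck_SucI[OF ab, where f'="\<lambda>x. c * nderiv 1 a b f x"])
      (use Ck_SucD[OF Suc.prems] in \<open>auto intro: has_vector_derivative_mult_right Suc.IH\<close>)
qed (simp add: Ck_0 continuous_on_mult_left)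

lemma Ck_mult: "Ck m a b f \<Longrightarrow> Ck m a b g \<Longrightarrow> Ck m a b (\<lambda>x. f x * g x :: 'k::real_normed_field)"
proof (induction m arbitrary: f g)
  case (Suc m)
  show ?case
    by (rule Ck_SucI[OF ab, where f'="\<lambda>x. f x * nderiv 1 a b g x + nderiv 1 a b f x * g x"])
      (use Ck_SucD[OF Suc.prems(1)] Ck_SucD[OF Suc.prems(2)] Suc.prems[THEN Ck_Suc_imp_Ck]
        in \<open>auto intro: has_vector_derivative_mult Suc.IH Ck_add\<close>)
qed (simp add: Ck_0 continuous_on_mult)

lemma Ck_inverse:
  "Ck m a b f \<Longrightarrow> \<forall>x\<in>{a..b}. f x \<noteq> 0 \<Longrightarrow> Ck m a b (\<lambda>x. inverse (f x) :: 'k::real_normed_field)"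
proof (induction m arbitrary: f)
  case (Suc m)
  have deriv: "((\<lambda>x. inverse (f x)) has_vector_derivative
      - (inverse (f x) * nderiv 1 a b f x * inverse (f x))) (at x within {a..b})" if "x \<in> {a..b}" for x
  proof -
    have "(f has_derivative (\<lambda>h. h *\<^sub>R nderiv 1 a b f x)) (at x within {a..b})"
      using Ck_SucD(1)[OF Suc.prems(1) that] by (simp add: has_vector_derivative_def)
    from Deriv.has_derivative_inverse[OF _ this] Suc.prems(2) that show ?thesis
      unfolding has_vector_derivative_def
      by (auto elim!: has_derivative_eq_rhs simp: fun_eq_iff scaleR_conv_of_real algebra_simps)
  qed
  have "Ck m a b (\<lambda>x. inverse (f x))"
    using Suc.IH[OF Ck_Suc_imp_Ck[OF Suc.prems(1)] Suc.prems(2)] .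
  then show ?case
    using Ck_SucD[OF Suc.prems(1)] Ck_cmult[of m _ "-1"]
    by (intro Ck_SucI[OF ab deriv]) (auto intro!: Ck_mult)
qed (simp add: Ck_0 continuous_on_inverse)

lemma Ck_divide:
  "Ck m a b f \<Longrightarrow> Ck m a b g \<Longrightarrow> \<forall>x\<in>{a..b}. g x \<noteq> 0 \<Longrightarrow> Ck m a b (\<lambda>x. f x / g x :: 'k::real_normed_field)"
  using Ck_mult[OF _ Ck_inverse, of m f g] by (simp add: divide_inverse)

lemma nderiv_lincomb:
  assumes "finite I" "\<forall>i\<in>I. Ck m a b (F i)" "j \<le> m" "x \<in> {a..b}"
  shows "nderiv j a b (\<lambda>x. \<Sum>i\<in>I. c i * F i x) x = (\<Sum>i\<in>I. c i * nderiv j a b (F i) x :: 'k::real_normed_field)"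
  using assms(2-)
proof (induction j arbitrary: m F x)
  case (Suc j)
  then obtain m' where m: "m = Suc m'" by (cases m) auto
  have C': "\<forall>i\<in>I. Ck m' a b (nderiv 1 a b (F i))"
    using Suc.prems(1) Ck_SucD(2) unfolding m by blast
  have "nderiv 1 a b (\<lambda>x. \<Sum>i\<in>I. c i * F i x) y = (\<Sum>i\<in>I. c i * nderiv 1 a b (F i) y)"
    if "y \<in> {a..b}" for y
    using Suc.prems(1) Ck_SucD(1) that unfolding m
    by (intro nderiv_1_eqI[OF ab that] has_vector_derivative_sum has_vector_derivative_mult_right) blast
  then have "nderiv (Suc j) a b (\<lambda>x. \<Sum>i\<in>I. c i * F i x) x
      = nderiv j a b (\<lambda>x. \<Sum>i\<in>I. c i * nderiv 1 a b (F i) x) x"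
    unfolding nderiv_Suc_inner using Suc.prems(3) by (intro nderiv_cong) auto
  also have "\<dots> = (\<Sum>i\<in>I. c i * nderiv (Suc j) a b (F i) x)"
    unfolding nderiv_Suc_inner using Suc.prems m by (intro Suc.IH[OF C']) auto
  finally show ?case .
qed simp

lemma nderiv_cmult:
  "Ck m a b f \<Longrightarrow> j \<le> m \<Longrightarrow> x \<in> {a..b} \<Longrightarrow>
    nderiv j a b (\<lambda>x. c * f x :: 'k::real_normed_field) x = c * nderiv j a b f x"
  using nderiv_lincomb[of "{0::nat}" m "\<lambda>_. f" j x "\<lambda>_. c"] by simp

lemma nderiv_add:
  "Ck m a b f \<Longrightarrow> Ck m a b g \<Longrightarrow> j \<le> m \<Longrightarrow> x \<in> {a..b} \<Longrightarrow>
    nderiv j a b (\<lambda>x. f x + g x :: 'k::real_normed_field) x = nderiv j a b f x + nderiv j a b g x"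
  using nderiv_lincomb[of "{0, 1::nat}" m "\<lambda>i. if i = 0 then f else g" j x "\<lambda>_. 1"] by simp

lemma nderiv_zero_on:
  "\<forall>y\<in>{a..b}. f y = 0 \<Longrightarrow> x \<in> {a..b} \<Longrightarrow> nderiv j a b f x = (0 :: 'k::real_normed_field)"
  using nderiv_cong[of a b f "\<lambda>_. 0"] nderiv_lincomb[of "{}::nat set" j _ j x] by simp


lemma has_vector_derivative_reflect:
  assumes "x \<in> {a..b}" "(f has_vector_derivative v) (at (a + b - x) within {a..b})"
  shows "((\<lambda>x. f (a + b - x)) has_vector_derivative - v) (at x within {a..b})"
proof -
  have "(\<lambda>x. a + b - x) ` {a..b} = {a..b}"
    by (auto simp: image_iff intro!: bexI[where x="a + b - _"])
  moreover have "((\<lambda>x. a + b - x) has_vector_derivative -1) (at x within {a..b})"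
    by (auto intro!: derivative_eq_intros)
  ultimately show ?thesis
    using vector_diff_chain_within[of "\<lambda>x. a + b - x" "-1" x "{a..b}" f v] assms(2) by (simp add: o_def)
qed

lemma Ck_reflect: "Ck m a b f \<Longrightarrow> Ck m a b (\<lambda>x. f (a + b - x) :: 'k::real_normed_field)"
proof (induction m arbitrary: f)
  case 0
  have "continuous_on {a..b} (\<lambda>x. a + b - x)" by (intro continuous_intros)
  moreover have "(\<lambda>x. a + b - x) ` {a..b} \<subseteq> {a..b}" by auto
  ultimately show ?case
    using continuous_on_compose2[of "{a..b}" f] 0 unfolding Ck_0 by blast
next
  case (Suc m)
  note df = Ck_SucD[OF Suc.prems]
  have "((\<lambda>x. f (a + b - x)) has_vector_derivative - nderiv 1 a b f (a + b - x)) (at x within {a..b})"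
    if "x \<in> {a..b}" for x
  proof -
    have "a + b - x \<in> {a..b}" using that by auto
    from has_vector_derivative_reflect[OF that df(1)[OF this]] show ?thesis .
  qed
  moreover have "Ck m a b (\<lambda>x. - nderiv 1 a b f (a + b - x))"
    using Ck_cmult[OF Suc.IH[OF df(2)], of "-1"] by simp
  ultimately show ?case
    by (rule Ck_SucI[OF ab])
qed

lemma nderiv_reflect:
  fixes f :: "real \<Rightarrow> 'k::real_normed_field"
  assumes "Ck m a b f" "j \<le> m" "x \<in> {a..b}"
  shows "nderiv j a b (\<lambda>x. f (a + b - x)) x = (-1) ^ j * nderiv j a b f (a + b - x)"
  using assms
proof (induction j arbitrary: m f x)
  case (Suc j)
  then obtain m' where m: "m = Suc m'" by (cases m) auto
  note df = Ck_SucD[OF Suc.prems(1)[unfolded m]]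
  have "nderiv 1 a b (\<lambda>x. f (a + b - x)) y = -1 * nderiv 1 a b f (a + b - y)" if "y \<in> {a..b}" for y
  proof -
    have "a + b - y \<in> {a..b}" using that by auto
    from has_vector_derivative_reflect[OF that df(1)[OF this]] show ?thesis
      by (intro nderiv_1_eqI[OF ab that]) simp
  qed
  then have "nderiv (Suc j) a b (\<lambda>x. f (a + b - x)) x = nderiv j a b (\<lambda>y. -1 * nderiv 1 a b f (a + b - y)) x"
    unfolding nderiv_Suc_inner using Suc.prems(3) by (intro nderiv_cong) auto
  also have "\<dots> = - nderiv j a b (\<lambda>y. nderiv 1 a b f (a + b - y)) x"
    using nderiv_cmult[OF Ck_reflect[OF df(2)], of j x "-1"] Suc.prems m by simp
  also have "\<dots> = (-1) ^ Suc j * nderiv (Suc j) a b f (a + b - x)"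
    unfolding nderiv_Suc_inner using Suc.IH[OF df(2)] Suc.prems m by simp
  finally show ?case .
qed simp

lemma nderiv_mult_at_zero:
  assumes "Ck m a b f" "Ck m a b g" "k \<le> m" "c \<in> {a..b}" "\<forall>i<k. nderiv i a b f c = 0"
  shows "(\<forall>i<k. nderiv i a b (\<lambda>x. f x * g x :: 'k::real_normed_field) c = 0) \<and>
    nderiv k a b (\<lambda>x. f x * g x) c = nderiv k a b f c * g c"
  using assms
proof (induction k arbitrary: m f g)
  case (Suc k)
  then obtain m' where m: "m = Suc m'" by (cases m) auto
  let ?f' = "nderiv 1 a b f" and ?g' = "nderiv 1 a b g"
  note df = Ck_SucD[OF Suc.prems(1)[unfolded m]] and dg = Ck_SucD[OF Suc.prems(2)[unfolded m]]
  have f: "Ck m' a b f" and g: "Ck m' a b g" and k: "k \<le> m'"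
    using Suc.prems m by (auto intro: Ck_Suc_imp_Ck)
  have fg': "(\<forall>i<k. nderiv i a b (\<lambda>x. f x * ?g' x) c = 0) \<and>
      nderiv k a b (\<lambda>x. f x * ?g' x) c = nderiv k a b f c * ?g' c"
    using Suc.prems(4,5) by (intro Suc.IH[OF f dg(2) k]) auto
  have f'g: "(\<forall>i<k. nderiv i a b (\<lambda>x. ?f' x * g x) c = 0) \<and>
      nderiv k a b (\<lambda>x. ?f' x * g x) c = nderiv k a b ?f' c * g c"
    using Suc.prems(4,5) by (intro Suc.IH[OF df(2) g k]) (metis Suc_mono nderiv_Suc_inner)+
  have "\<forall>y\<in>{a..b}. nderiv 1 a b (\<lambda>x. f x * g x) y = f y * ?g' y + ?f' y * g y"
    using nderiv_1_eqI[OF ab _ has_vector_derivative_mult[OF df(1) dg(1)]] by blast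
  then have step: "nderiv (Suc i) a b (\<lambda>x. f x * g x) c
      = nderiv i a b (\<lambda>x. f x * ?g' x) c + nderiv i a b (\<lambda>x. ?f' x * g x) c" if "i \<le> k" for i
  proof -
    assume "\<forall>y\<in>{a..b}. nderiv 1 a b (\<lambda>x. f x * g x) y = f y * ?g' y + ?f' y * g y"
    then have "nderiv (Suc i) a b (\<lambda>x. f x * g x) c = nderiv i a b (\<lambda>y. f y * ?g' y + ?f' y * g y) c"
      unfolding nderiv_Suc_inner using Suc.prems(4) by (rule nderiv_cong)
    also have "\<dots> = nderiv i a b (\<lambda>x. f x * ?g' x) c + nderiv i a b (\<lambda>x. ?f' x * g x) c"
      by (rule nderiv_add[OF Ck_mult[OF f dg(2)] Ck_mult[OF df(2) g]]) (use that k Suc.prems(4) in auto)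
    finally show ?thesis .
  qed
  have "f c = 0"
    using Suc.prems(5) by (metis nderiv.simps(1) zero_less_Suc)
  have "nderiv i a b (\<lambda>x. f x * g x) c = 0" if "i < Suc k" for i
  proof (cases i)
    case (Suc i')
    then show ?thesis using step[of i'] fg' f'g that by simp
  qed (simp add: \<open>f c = 0\<close>)
  moreover have "nderiv (Suc k) a b (\<lambda>x. f x * g x) c = nderiv (Suc k) a b f c * g c"
    unfolding step[OF order_refl] using fg' f'g Suc.prems(5) by simp
  ultimately show ?case by blast
qed simp

end

lemma Reals_valued_obtain:
  assumes "\<forall>y\<in>S. g y \<in> \<real>"
  obtains G where "\<forall>y\<in>S. g y = of_real (G y)"
proof -
  have "\<exists>r. g y = of_real r" if "y \<in> S" for y
  proof -
    have "g y \<in> \<real>" using assms that by blast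
    then obtain r where "g y = of_real r" by (rule Reals_cases)
    then show ?thesis ..
  qed
  then have "\<forall>y\<in>S. \<exists>r. g y = of_real r" by blast
  from bchoice[OF this] obtain G where "\<forall>y\<in>S. g y = of_real (G y)" ..
  then show ?thesis by (rule that)
qed

lemma closed_Reals: "closed (\<real> :: 'a::real_normed_div_algebra set)"
proof (unfold closed_sequential_limits, intro allI impI)
  fix x :: "nat \<Rightarrow> 'a" and l
  assume x: "(\<forall>n. x n \<in> \<real>) \<and> x \<longlonglongrightarrow> l"
  then obtain r where r: "\<forall>n. x n = of_real (r n)"
    using Reals_valued_obtain[of UNIV x] by auto
  then have lim: "(\<lambda>n. of_real (r n) :: 'a) \<longlonglongrightarrow> l"
    using x by (simp add: fun_eq_iff[symmetric])
  have "Cauchy r"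
    using LIMSEQ_imp_Cauchy[OF lim] unfolding Cauchy_def dist_of_real .
  then obtain c where "r \<longlonglongrightarrow> c"
    using Cauchy_convergent_iff convergent_def by blast
  then have "l = of_real c"
    using LIMSEQ_unique[OF lim tendsto_of_real] by blast
  then show "l \<in> \<real>" by simp
qed

lemma has_vector_derivative_quotient_tendsto:
  assumes "(f has_vector_derivative v) (at x within S)"
  shows "((\<lambda>y. (f y - f x) /\<^sub>R (y - x)) \<longlongrightarrow> v) (at x within S)"
proof -
  have "((\<lambda>y. norm (f y - f x - (y - x) *\<^sub>R v) / norm (y - x)) \<longlongrightarrow> 0) (at x within S)"
    using assms by (simp add: has_vector_derivative_def has_derivative_iff_norm)
  moreover have "\<forall>\<^sub>F y in at x within S.
    norm (f y - f x - (y - x) *\<^sub>R v) / norm (y - x) = norm ((f y - f x) /\<^sub>R (y - x) - v)"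
  proof (rule eventually_at_filter[THEN iffD2, OF always_eventually], intro allI impI)
    fix y assume "y \<noteq> x"
    then have "(f y - f x) /\<^sub>R (y - x) - v = (1 / (y - x)) *\<^sub>R (f y - f x - (y - x) *\<^sub>R v)"
      by (simp add: scaleR_diff_right divide_inverse)
    then show "norm (f y - f x - (y - x) *\<^sub>R v) / norm (y - x) = norm ((f y - f x) /\<^sub>R (y - x) - v)"
      by (simp add: divide_inverse abs_inverse)
  qed
  ultimately have "((\<lambda>y. norm ((f y - f x) /\<^sub>R (y - x) - v)) \<longlongrightarrow> 0) (at x within S)"
    by (rule Lim_transform_eventually)
  then show ?thesis
    by (simp add: tendsto_norm_zero_iff LIM_zero_iff)
qed

lemma has_vector_derivative_of_real_valued:
  fixes f :: "real \<Rightarrow> 'k::real_normed_field"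
  assumes F: "\<forall>y\<in>S. f y = of_real (F y)" and x: "x \<in> S" and nontriv: "at x within S \<noteq> bot"
    and deriv: "(f has_vector_derivative v) (at x within S)"
  shows "\<exists>r. v = of_real r \<and> (F has_real_derivative r) (at x within S)"
proof -
  have "\<forall>\<^sub>F y in at x within S. (f y - f x) /\<^sub>R (y - x) = of_real ((F y - F x) / (y - x))"
    using F x by (auto simp: eventually_at_filter scaleR_conv_of_real divide_inverse mult.commute)
  with has_vector_derivative_quotient_tendsto[OF deriv]
  have lim: "((\<lambda>y. of_real ((F y - F x) / (y - x)) :: 'k) \<longlongrightarrow> v) (at x within S)"
    by (rule Lim_transform_eventually)
  have "v \<in> \<real>"
    by (rule Lim_in_closed_set[OF closed_Reals _ nontriv lim]) simp
  then obtain r where v: "v = of_real r"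
    by (auto elim: Reals_cases)
  have "((\<lambda>y. (F y - F x) / (y - x)) \<longlongrightarrow> r) (at x within S)"
    using lim unfolding v tendsto_of_real_iff .
  with v show ?thesis
    unfolding has_field_derivative_iff by blast
qed

lemma zero_order_unique: "zero_order a b f c k \<Longrightarrow> zero_order a b f c l \<Longrightarrow> k = l"
  unfolding zero_order_def by (metis linorder_neqE_nat)

context
  fixes a b :: real
  assumes ab: "a < b"
begin

lemma at_within_Icc_nontrivial: "x \<in> {a..b} \<Longrightarrow> at x within {a..b} \<noteq> bot"
  using ab by (simp add: trivial_limit_within)

lemma nderiv_Reals:
  fixes f :: "real \<Rightarrow> 'k::real_normed_field"
  assumes "Ck m a b f" "\<forall>y\<in>{a..b}. f y \<in> \<real>" "j \<le> m" "x \<in> {a..b}"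
  shows "nderiv j a b f x \<in> \<real>"
  using assms(3,4)
proof (induction j arbitrary: x)
  case (Suc j)
  then have "\<forall>y\<in>{a..b}. nderiv j a b f y \<in> \<real>"
    by simp
  then obtain F where F: "\<forall>y\<in>{a..b}. nderiv j a b f y = of_real (F y)"
    by (rule Reals_valued_obtain)
  have "(nderiv j a b f has_vector_derivative nderiv (Suc j) a b f x) (at x within {a..b})"
    using assms(1) Suc.prems unfolding Ck_def by auto
  from has_vector_derivative_of_real_valued[OF F Suc.prems(2) at_within_Icc_nontrivial[OF Suc.prems(2)] this]
  show ?case
    by auto
qed (use assms(2) in simp)


lemma sign_near_left_endpoint:
  fixes f :: "real \<Rightarrow> 'k::real_normed_field"
  assumes "Ck m a b f" "\<forall>y\<in>{a..b}. f y = of_real (F y)"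
    and "\<forall>i<m. nderiv i a b f a = 0" "nderiv m a b f a = of_real L" "L \<noteq> 0"
  shows "\<exists>\<epsilon>>0. \<forall>x. a < x \<and> x < a + \<epsilon> \<longrightarrow> x \<le> b \<and> F x * L > 0"
  using assms
proof (induction m arbitrary: f F L)
  case 0
  have "continuous_on {a..b} (\<lambda>x. of_real (F x) :: 'k)"
    using 0(2) by (intro continuous_on_cong[THEN iffD1, OF refl _ 0(1)[unfolded Ck_0]]) auto
  then have "continuous_on {a..b} F"
    unfolding continuous_on_iff dist_of_real .
  moreover have "a \<in> {a..b}" "\<bar>L\<bar> > 0"
    using ab 0(5) by auto
  ultimately obtain d where d: "d > 0" "\<forall>x\<in>{a..b}. dist x a < d \<longrightarrow> dist (F x) (F a) < \<bar>L\<bar>"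
    unfolding continuous_on_iff by blast
  have "F a = L"
    using 0(2,4) ab by simp
  show ?case
  proof (intro exI[of _ "min d (b - a)"] conjI allI impI)
    fix x assume x: "a < x \<and> x < a + min d (b - a)"
    then show "x \<le> b" by linarith
    with x d \<open>F a = L\<close> have "\<bar>F x - L\<bar> < \<bar>L\<bar>"
      by (auto simp: dist_real_def)
    then show "F x * L > 0"
      by (cases "L > 0") (auto simp: zero_less_mult_iff abs_if split: if_splits)
  qed (use d ab in auto)
next
  case (Suc m)
  let ?f' = "nderiv 1 a b f"
  have "\<forall>y\<in>{a..b}. ?f' y \<in> \<real>"
    using nderiv_Reals[OF Suc.prems(1), of 1] Suc.prems(2) by auto
  then obtain F' where F': "\<forall>y\<in>{a..b}. ?f' y = of_real (F' y)"
    by (rule Reals_valued_obtain)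
  have "\<forall>i<m. nderiv i a b ?f' a = 0" "nderiv m a b ?f' a = of_real L"
    using Suc.prems(3,4) by auto
  then obtain \<epsilon> where \<epsilon>: "\<epsilon> > 0" "\<forall>x. a < x \<and> x < a + \<epsilon> \<longrightarrow> x \<le> b \<and> F' x * L > 0"
    using Suc.IH[OF Ck_SucD(2)[OF Suc.prems(1)] F' _ _ Suc.prems(5)] by blast
  have deriv: "(F has_real_derivative F' y) (at y within {a..b})" if y: "y \<in> {a..b}" for y
  proof -
    obtain r where "of_real (F' y) = (of_real r :: 'k)" "(F has_real_derivative r) (at y within {a..b})"
      using has_vector_derivative_of_real_valued[OF Suc.prems(2) y at_within_Icc_nontrivial[OF y]
          Ck_SucD(1)[OF Suc.prems(1) y]] F' y by auto
    then show ?thesis by simp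
  qed
  have "F a = 0"
    using Suc.prems(2,3) ab by fastforce
  show ?case
  proof (intro exI[of _ \<epsilon>] conjI allI impI)
    fix x assume x: "a < x \<and> x < a + \<epsilon>"
    then show "x \<le> b" using \<epsilon> by blast
    have "(F has_derivative (*) (F' y)) (at y within {a..x})" if "a \<le> y" "y \<le> x" for y
    proof -
      have "y \<in> {a..b}" "{a..x} \<subseteq> {a..b}" using that \<open>x \<le> b\<close> by auto
      from DERIV_subset[OF deriv[OF this(1)] this(2)] show ?thesis
        unfolding has_field_derivative_def .
    qed
    then obtain z where z: "a < z" "z < x" "F x - F a = F' z * (x - a)"
      using mvt_simple[OF conjunct1[OF x]] by fastforce
    have "F x = F' z * (x - a)"
      using z(3) \<open>F a = 0\<close> by simp
    then have eq: "F x * L = (x - a) * (F' z * L)"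
      by simp
    have "F' z * L > 0"
      using \<epsilon> x z(1,2) by simp
    then show "F x * L > 0"
      unfolding eq using x by simp
  qed (rule \<epsilon>(1))
qed


lemma nderiv_pos_at_left:
  fixes f :: "real \<Rightarrow> 'k::real_normed_field"
  assumes C: "Ck m a b f" and nonneg: "\<forall>y\<in>{a..b}. \<exists>r::real. r \<ge> 0 \<and> f y = of_real r"
    and zero: "zero_order a b f a m"
  shows "\<exists>L>0. nderiv m a b f a = of_real L"
proof -
  from bchoice[OF nonneg] obtain F where F: "\<forall>y\<in>{a..b}. F y \<ge> 0 \<and> f y = of_real (F y)"
    by blast
  then have "nderiv m a b f a \<in> \<real>"
    using ab by (intro nderiv_Reals[OF C]) auto
  then obtain L where L: "nderiv m a b f a = of_real L"
    by (rule Reals_cases)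
  with zero have "L \<noteq> 0"
    by (auto simp: zero_order_def)
  have "\<not> L < 0"
  proof
    assume "L < 0"
    obtain \<epsilon> where \<epsilon>: "\<epsilon> > 0" "\<forall>x. a < x \<and> x < a + \<epsilon> \<longrightarrow> x \<le> b \<and> F x * L > 0"
      using sign_near_left_endpoint[OF C _ _ L \<open>L \<noteq> 0\<close>, of F] F zero by (auto simp: zero_order_def)
    define x where "x = a + min \<epsilon> (b - a) / 2"
    have "a < x" "x < a + \<epsilon>"
      using \<epsilon>(1) ab by (auto simp: x_def)
    with \<epsilon>(2) have "x \<le> b" "F x * L > 0"
      by auto
    moreover have "F x \<ge> 0"
      using F \<open>a < x\<close> \<open>x \<le> b\<close> by auto
    ultimately show False
      using mult_nonneg_nonpos[of "F x" L] \<open>L < 0\<close> by linarith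
  qed
  with L \<open>L \<noteq> 0\<close> show ?thesis
    by (intro exI[of _ L]) auto
qed

text \<open>At the right endpoint the sign alternates with the order of the zero; this follows from the
  left endpoint case by the reflection \<open>x \<mapsto> a + b - x\<close>.\<close>
lemma nderiv_sign_at_right:
  fixes f :: "real \<Rightarrow> 'k::real_normed_field"
  assumes C: "Ck m a b f" and nonneg: "\<forall>y\<in>{a..b}. \<exists>r::real. r \<ge> 0 \<and> f y = of_real r"
    and zero: "zero_order a b f b m"
  shows "\<exists>L>0. nderiv m a b f b = (-1) ^ m * of_real L"
proof -
  let ?g = "\<lambda>x. f (a + b - x)"
  have reflect: "nderiv j a b ?g a = (-1) ^ j * nderiv j a b f b" if "j \<le> m" for j
    using nderiv_reflect[OF ab C that, of a] ab by simp
  have "\<forall>y\<in>{a..b}. \<exists>r::real. r \<ge> 0 \<and> ?g y = of_real r"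
    using nonneg by auto
  moreover have "zero_order a b ?g a m"
    using zero reflect by (simp add: zero_order_def)
  ultimately obtain L where "L > 0" "nderiv m a b ?g a = of_real L"
    using nderiv_pos_at_left[OF Ck_reflect[OF ab C]] by blast
  then have "nderiv m a b f b = (-1) ^ m * of_real L"
    using reflect[of m] by (metis left_minus_one_mult_self order_refl)
  with \<open>L > 0\<close> show ?thesis
    by blast
qed

text \<open>Functions \<open>F k\<close> with zeros of pairwise distinct orders \<open>ord k\<close> at \<open>c\<close> behave like a triangular
  system: the \<open>ord r\<close>-th derivative of a combination only sees the coefficients of lower order.\<close>
lemma nderiv_lincomb_zero_orders:
  fixes F :: "nat \<Rightarrow> real \<Rightarrow> 'k::real_normed_field"
  assumes C: "\<forall>k\<le>m. Ck N a b (F k)" and Z: "\<forall>k\<le>m. \<forall>j<ord k. nderiv j a b (F k) c = 0"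
    and r: "r \<le> m" "ord r \<le> N" and c: "c \<in> {a..b}"
    and u: "\<forall>k\<le>m. k \<noteq> r \<and> ord k \<le> ord r \<longrightarrow> u k = 0"
  shows "nderiv (ord r) a b (\<lambda>x. \<Sum>k\<le>m. u k * F k x) c = u r * nderiv (ord r) a b (F r) c"
proof -
  have "nderiv (ord r) a b (\<lambda>x. \<Sum>k\<le>m. u k * F k x) c = (\<Sum>k\<le>m. u k * nderiv (ord r) a b (F k) c)"
    using C r c by (intro nderiv_lincomb[OF ab]) auto
  also have "\<dots> = (\<Sum>k\<in>{r}. u k * nderiv (ord r) a b (F k) c)"
  proof (rule sum.mono_neutral_right)
    show "\<forall>k\<in>{..m} - {r}. u k * nderiv (ord r) a b (F k) c = 0"
    proof
      fix k assume "k \<in> {..m} - {r}"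
      then show "u k * nderiv (ord r) a b (F k) c = 0"
        using u Z by (cases "ord k \<le> ord r") auto
    qed
  qed (use r in auto)
  finally show ?thesis
    by simp
qed

lemma lincomb_coeffs_vanish_zero_orders:
  fixes F :: "nat \<Rightarrow> real \<Rightarrow> 'k::real_normed_field"
  assumes C: "\<forall>k\<le>m. Ck N a b (F k)" and Z: "\<forall>k\<le>m. zero_order a b (F k) c (ord k)"
    and ord: "inj_on ord {..m}" "\<forall>k\<le>m. ord k \<le> N" and c: "c \<in> {a..b}"
    and D: "\<forall>i<s. nderiv i a b (\<lambda>x. \<Sum>k\<le>m. u k * F k x) c = 0"
  shows "\<forall>k\<le>m. ord k < s \<longrightarrow> u k = 0"
proof -
  have "\<forall>k\<le>m. ord k = v \<longrightarrow> v < s \<longrightarrow> u k = 0" for v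
  proof (induction v rule: less_induct)
    case (less v)
    show ?case
    proof (intro allI impI)
      fix k assume k: "k \<le> m" "ord k = v" "v < s"
      have "\<forall>k'\<le>m. k' \<noteq> k \<and> ord k' \<le> ord k \<longrightarrow> u k' = 0"
        using less.IH k ord(1) by (metis atMost_iff inj_onD le_neq_implies_less order.strict_trans)
      then have "nderiv v a b (\<lambda>x. \<Sum>k\<le>m. u k * F k x) c = u k * nderiv v a b (F k) c"
        using nderiv_lincomb_zero_orders[OF C _ k(1) _ c] Z ord(2) k by (auto simp: zero_order_def)
      moreover have "nderiv v a b (F k) c \<noteq> 0"
        using Z k by (auto simp: zero_order_def)
      ultimately show "u k = 0"
        using D k by simp
    qed
  qed
  then show ?thesis
    by blast
qed

lemma lincomb_eq_zero_zero_orders: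
  fixes F :: "nat \<Rightarrow> real \<Rightarrow> 'k::real_normed_field"
  assumes C: "\<forall>k\<le>m. Ck N a b (F k)" and Z: "\<forall>k\<le>m. zero_order a b (F k) c (ord k)"
    and ord: "inj_on ord {..m}" "\<forall>k\<le>m. ord k \<le> N" and c: "c \<in> {a..b}"
    and E: "\<forall>x\<in>{a..b}. (\<Sum>k\<le>m. u k * F k x) = 0"
  shows "\<forall>k\<le>m. u k = 0"
  using lincomb_coeffs_vanish_zero_orders[OF C Z ord c, of "Suc N"] nderiv_zero_on[OF ab E c] ord(2)
  by (simp add: le_imp_less_Suc)

end

lemma (in vector_space) subset_span_if_independent_card_ge:
  assumes S: "finite S" and B: "independent B" "B \<subseteq> span S" and card: "card S \<le> card B"
  shows "S \<subseteq> span B"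
proof
  fix s assume "s \<in> S"
  show "s \<in> span B"
  proof (rule ccontr)
    assume s: "s \<notin> span B"
    have "finite B"
      using independent_span_bound[OF S B] by blast
    moreover have "s \<notin> B"
      using s span_base by blast
    moreover have "finite (insert s B) \<and> card (insert s B) \<le> card S"
      using \<open>s \<in> S\<close> B span_base[of s S] span_mono[of B "span S"]
      by (intro independent_span_bound[OF S independent_insertI[OF s B(1)]]) (auto simp: span_span)
    ultimately show False
      using card by simp
  qed
qed

lemma sum_fun_apply: "(\<Sum>i\<in>A. f i) x = (\<Sum>i\<in>A. f i x)"
  by (induction A rule: infinite_finite_induct) auto

interpretation fscale: vector_space "fscale :: 'k::real_normed_field \<Rightarrow> (real \<Rightarrow> 'k) \<Rightarrow> real \<Rightarrow> 'k"
  by unfold_locales (auto simp: fscale_def fun_eq_iff algebra_simps)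

lemma fscale_sum: "(\<Sum>k\<in>A. fscale (c k) (F k)) = (\<lambda>x. \<Sum>k\<in>A. c k * F k x :: 'k::real_normed_field)"
  by (simp add: fun_eq_iff sum_fun_apply fscale_def)

lemma lincomb_in_fscale_span:
  "(\<lambda>x. \<Sum>k\<in>A. c k * F k x :: 'k::real_normed_field) \<in> fscale.span (F ` A)"
  unfolding fscale_sum[symmetric] by (intro fscale.span_sum fscale.span_scale fscale.span_base) auto

lemma fscale_span_image_lincomb:
  fixes F :: "nat \<Rightarrow> real \<Rightarrow> 'k::real_normed_field"
  assumes "inj_on F A" "finite A" "v \<in> fscale.span (F ` A)"
  obtains c where "v = (\<lambda>x. \<Sum>k\<in>A. c k * F k x)"
proof -
  obtain u where "v = (\<Sum>w\<in>F ` A. fscale (u w) w)"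
    using assms(2,3) fscale.span_finite[of "F ` A"] by auto
  also have "\<dots> = (\<Sum>k\<in>A. fscale (u (F k)) (F k))"
    using assms(1) by (rule sum.reindex_cong) simp_all
  finally show ?thesis
    unfolding fscale_sum by (rule that)
qed

lemma fscale_independent_image:
  fixes F :: "nat \<Rightarrow> real \<Rightarrow> 'k::real_normed_field"
  assumes "inj_on F A" "finite A"
    and zero: "\<And>c. (\<lambda>x. \<Sum>k\<in>A. c k * F k x) = 0 \<Longrightarrow> \<forall>k\<in>A. c k = 0"
  shows "fscale.independent (F ` A)"
proof (rule fscale.independent_if_scalars_zero)
  fix u w assume u: "(\<Sum>w\<in>F ` A. fscale (u w) w) = 0" and w: "w \<in> F ` A"
  have "(\<Sum>w\<in>F ` A. fscale (u w) w) = (\<Sum>k\<in>A. fscale (u (F k)) (F k))"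
    using assms(1) by (rule sum.reindex_cong) simp_all
  with u have "\<forall>k\<in>A. u (F k) = 0"
    by (intro zero) (simp add: fscale_sum)
  with w show "u w = 0"
    by blast
qed (use assms(2) in simp)

lemma bidiagonal_step_real:
  fixes B G :: "nat \<Rightarrow> real"
  assumes eqB: "B j * D + B (Suc j) * C = 0" and eqG: "G j * D + G (Suc j) * C = W"
    and "C > 0" "D < 0" "W \<ge> 0" "B j > 0"
  shows "B (Suc j) > 0" "G j / B j \<le> G (Suc j) / B (Suc j)"
proof -
  have "B (Suc j) * C = - (B j * D)"
    using eqB by simp
  moreover have "B j * D < 0"
    using assms(4,6) by (simp add: mult_pos_neg)
  ultimately have "B (Suc j) * C > 0"
    by linarith
  then show pos: "B (Suc j) > 0"
    using \<open>C > 0\<close> by (simp add: zero_less_mult_iff)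
  have "(G (Suc j) * B j - G j * B (Suc j)) * C
      = B j * (G j * D + G (Suc j) * C) - G j * (B j * D + B (Suc j) * C)"
    by (simp add: algebra_simps)
  also have "\<dots> = W * B j"
    using eqB eqG by simp
  finally have "(G (Suc j) * B j - G j * B (Suc j)) * C = W * B j" .
  moreover have "W * B j \<ge> 0"
    using \<open>W \<ge> 0\<close> \<open>B j > 0\<close> by simp
  ultimately have "(G (Suc j) * B j - G j * B (Suc j)) * C \<ge> 0"
    by linarith
  then have "G (Suc j) * B j - G j * B (Suc j) \<ge> 0"
    using \<open>C > 0\<close> by (simp add: zero_le_mult_iff)
  then have "G j * B (Suc j) \<le> G (Suc j) * B j"
    by linarith
  then show "G j / B j \<le> G (Suc j) / B (Suc j)"
    using pos \<open>B j > 0\<close> by (simp add: divide_le_eq le_divide_eq mult.commute)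
qed

lemma bidiagonal_solution_ratios_nondecreasing:
  fixes \<beta> \<gamma> :: "nat \<Rightarrow> 'k::real_normed_field" and C D W :: "nat \<Rightarrow> real"
  assumes eq\<beta>: "\<forall>j<n. \<beta> j * of_real (D j) + \<beta> (Suc j) * of_real (C j) = 0"
    and eq\<gamma>: "\<forall>j<n. \<gamma> j * of_real (D j) + \<gamma> (Suc j) * of_real (C j) = of_real (W j)"
    and signs: "\<forall>j<n. C j > 0 \<and> D j < 0 \<and> W j \<ge> 0"
    and start: "\<beta> 0 = of_real B0" "B0 > 0" "\<gamma> 0 \<in> \<real>"
  obtains B R where "\<forall>k\<le>n. B k > 0 \<and> \<beta> k = of_real (B k) \<and> \<gamma> k = of_real (R k) * \<beta> k"
    and "\<forall>k<n. R k \<le> R (Suc k)"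
proof -
  have "\<beta> k \<in> \<real> \<and> \<gamma> k \<in> \<real>" if "k \<le> n" for k
    using that
  proof (induction k)
    case (Suc k)
    have C: "of_real (C k) \<noteq> (0::'k)"
      using signs[rule_format, of k] Suc.prems by simp
    have "\<beta> (Suc k) * of_real (C k) = - (\<beta> k * of_real (D k))"
      using eq\<beta>[rule_format, of k] Suc.prems by (simp add: eq_neg_iff_add_eq_0 add.commute)
    then have "\<beta> (Suc k) = - (\<beta> k * of_real (D k)) / of_real (C k)"
      using C by (metis nonzero_mult_div_cancel_right)
    moreover have "\<gamma> (Suc k) = (of_real (W k) - \<gamma> k * of_real (D k)) / of_real (C k)"
      using eq\<gamma>[rule_format, of k] Suc.prems C by (simp add: field_simps)
    ultimately show ?case
      using Suc by simp
  qed (use start in simp)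
  then have "\<forall>k\<in>{..n}. \<beta> k \<in> \<real>" "\<forall>k\<in>{..n}. \<gamma> k \<in> \<real>"
    by auto
  then obtain B G where B: "\<forall>k\<in>{..n}. \<beta> k = of_real (B k)" and G: "\<forall>k\<in>{..n}. \<gamma> k = of_real (G k)"
    by (metis Reals_valued_obtain)
  have real_eqs: "B j * D j + B (Suc j) * C j = 0" "G j * D j + G (Suc j) * C j = W j" if "j < n" for j
    using that eq\<beta> eq\<gamma> B G by (auto simp flip: of_real_mult of_real_add)
  have pos: "B k > 0" if "k \<le> n" for k
    using that
  proof (induction k)
    case 0
    then show ?case using B start by auto
  next
    case (Suc k)
    then show ?case
      using bidiagonal_step_real(1)[of B k "D k" "C k" G "W k"] real_eqs[of k] signs by simp
  qed
  show ?thesis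
  proof
    show "\<forall>k\<le>n. B k > 0 \<and> \<beta> k = of_real (B k) \<and> \<gamma> k = of_real (G k / B k) * \<beta> k"
    proof (intro allI impI)
      fix k assume "k \<le> n"
      with pos B G have k: "B k > 0" "\<beta> k = of_real (B k)" "\<gamma> k = of_real (G k)"
        by auto
      then have "G k / B k * B k = G k"
        by simp
      then have "of_real (G k / B k) * \<beta> k = \<gamma> k"
        unfolding k(2,3) by (simp only: of_real_mult[symmetric])
      with k show "B k > 0 \<and> \<beta> k = of_real (B k) \<and> \<gamma> k = of_real (G k / B k) * \<beta> k"
        by simp
    qed
    show "\<forall>k<n. G k / B k \<le> G (Suc k) / B (Suc k)"
    proof (intro allI impI)
      fix k assume "k < n"
      then show "G k / B k \<le> G (Suc k) / B (Suc k)"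
        using bidiagonal_step_real(2)[of B k "D k" "C k" G "W k"] real_eqs[of k] signs pos[of k] by simp
    qed
  qed
qed

lemma interpolation_nodes_exist:
  fixes g :: "real \<Rightarrow> real" and R :: "nat \<Rightarrow> real"
  assumes "a \<le> b" "continuous_on {a..b} g" "0 < n"
    and "g a = R 0" "g b = R n" and mono: "\<forall>k<n. R k \<le> R (Suc k)"
  obtains t where "t 0 = a" "t n = b" "\<forall>k\<le>n. t k \<in> {a..b} \<and> g (t k) = R k"
proof -
  have R_mono: "R i \<le> R j" if "i \<le> j" "j \<le> n" for i j
    using that by (induction j) (auto simp: le_Suc_eq intro: order.trans[OF _ mono[rule_format]])
  have "\<exists>s. a \<le> s \<and> s \<le> b \<and> g s = R k" if "k \<le> n" for k
    using assms R_mono[of 0 k] R_mono[of k n] that by (intro IVT') auto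
  then obtain s where s: "\<forall>k\<le>n. a \<le> s k \<and> s k \<le> b \<and> g (s k) = R k"
    by metis
  define t where "t k = (if k = 0 then a else if k = n then b else s k)" for k
  show ?thesis
  proof
    show "t 0 = a" "t n = b"
      using \<open>0 < n\<close> by (simp_all add: t_def)
    show "\<forall>k\<le>n. t k \<in> {a..b} \<and> g (t k) = R k"
      using s assms by (auto simp: t_def)
  qed
qed

locale bernstein_setting =
  fixes a b :: real and n :: nat and U :: "(real \<Rightarrow> 'k::real_normed_field) set"
    and p q :: "nat \<Rightarrow> real \<Rightarrow> 'k" and f0 :: "real \<Rightarrow> 'k"
  assumes ab: "a < b" and U_Cn: "U \<subseteq> Cn n a b" and U_dim: "fscale.dim U = n + 1"
    and p_in: "\<forall>k\<le>n. p k \<in> U" and p_bern: "bernstein_basis a b n p" and p_nonneg: "nonneg_system a b n p"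
    and f0_in: "f0 \<in> U" and f0_pos: "\<forall>x\<in>{a..b}. \<exists>r::real. r > 0 \<and> f0 x = of_real r"
    and q_in: "\<forall>k<n. q k \<in> Dmod a b f0 U" and q_bern: "bernstein_basis a b (n - 1) q"
    and q_nonneg: "nonneg_system a b (n - 1) q"
begin

lemma U_Ck: "v \<in> U \<Longrightarrow> Ck n a b v"
  using U_Cn Cn_imp_Ck by blast

lemma p_Ck: "\<forall>k\<le>n. Ck n a b (p k)"
  using p_in U_Ck by blast

lemma p_zero_order_a: "\<forall>k\<le>n. zero_order a b (p k) a k"
  and p_zero_order_b: "\<forall>k\<le>n. zero_order a b (p k) b (n - k)"
  using p_bern unfolding bernstein_basis_def by auto

lemma p_inj: "inj_on p {..n}"
proof (rule inj_onI)
  fix k l assume "k \<in> {..n}" "l \<in> {..n}" "p k = p l"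
  then have "zero_order a b (p k) a k" "zero_order a b (p k) a l"
    using p_zero_order_a by auto
  then show "k = l"
    by (rule zero_order_unique)
qed

lemma p_lincomb_eq_zero: "\<forall>x\<in>{a..b}. (\<Sum>k\<le>n. u k * p k x) = 0 \<Longrightarrow> \<forall>k\<le>n. u k = 0"
  using lincomb_eq_zero_zero_orders[OF ab p_Ck, of a "\<lambda>k. k"] p_zero_order_a ab by auto

lemma U_subset_span_p: "U \<subseteq> fscale.span (p ` {..n})"
proof -
  obtain C where C: "C \<subseteq> U" "fscale.independent C" "U \<subseteq> fscale.span C" "card C = fscale.dim U"
    by (rule fscale.basis_exists)
  have "finite C"
    using C(4) U_dim card.infinite by force
  have "fscale.independent (p ` {..n})"
    using p_lincomb_eq_zero by (intro fscale_independent_image[OF p_inj finite_atMost]) (simp add: fun_eq_iff)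
  moreover have "p ` {..n} \<subseteq> fscale.span C"
    using p_in C(3) by auto
  moreover have "card C \<le> card (p ` {..n})"
    using C(4) U_dim card_image[OF p_inj] by simp
  ultimately have "C \<subseteq> fscale.span (p ` {..n})"
    by (rule fscale.subset_span_if_independent_card_ge[OF \<open>finite C\<close>])
  then have "fscale.span C \<subseteq> fscale.span (p ` {..n})"
    by (rule fscale.span_minimal[OF _ fscale.subspace_span])
  with C(3) show ?thesis
    by blast
qed

lemma U_lincomb:
  assumes "v \<in> U"
  obtains c where "v = (\<lambda>x. \<Sum>k\<le>n. c k * p k x)"
proof -
  have "v \<in> fscale.span (p ` {..n})"
    using U_subset_span_p assms by blast
  then obtain c where "v = (\<lambda>x. \<Sum>k\<le>n. c k * p k x)"
    by (rule fscale_span_image_lincomb[OF p_inj finite_atMost])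
  then show ?thesis
    by (rule that)
qed

lemma lincomb_p_at_a: "(\<Sum>k\<le>n. c k * p k a) = c 0 * p 0 a"
  using nderiv_lincomb_zero_orders[OF ab p_Ck, of "\<lambda>k. k" a 0 c] p_zero_order_a ab
  by (simp add: zero_order_def)

lemma lincomb_p_at_b: "(\<Sum>k\<le>n. c k * p k b) = c n * p n b"
  using nderiv_lincomb_zero_orders[OF ab p_Ck, of "\<lambda>k. n - k" b n c] p_zero_order_b ab
  by (simp add: zero_order_def)

lemma p_0_at_a: "\<exists>L>0. p 0 a = of_real L"
  using nderiv_pos_at_left[OF ab Ck_mono[of n], of "p 0" 0] p_Ck p_nonneg p_zero_order_a
  by (simp add: nonneg_system_def)

lemma p_n_at_b: "\<exists>L>0. p n b = of_real L"
  using nderiv_sign_at_right[OF ab Ck_mono[of n], of "p n" 0] p_Ck p_nonneg p_zero_order_b[rule_format, of n]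
  by (simp add: nonneg_system_def)


lemma f0_nonzero: "\<forall>x\<in>{a..b}. f0 x \<noteq> 0"
  using f0_pos by force

lemma f0_coeff_0_pos:
  assumes "f0 = (\<lambda>x. \<Sum>k\<le>n. \<beta> k * p k x)"
  shows "\<exists>B>0. \<beta> 0 = of_real B"
proof -
  have "a \<in> {a..b}"
    using ab by simp
  with f0_pos obtain F where F: "F > 0" "f0 a = of_real F"
    by blast
  obtain L where L: "L > 0" "p 0 a = of_real L"
    using p_0_at_a by blast
  have "\<beta> 0 * of_real L = of_real F"
    using assms lincomb_p_at_a[of \<beta>] F L by simp
  then have "\<beta> 0 = of_real (F / L)"
    using L by (simp add: eq_divide_eq)
  with F L show ?thesis
    by (intro exI[of _ "F / L"]) simp
qed

definition Dmod_map :: "(real \<Rightarrow> 'k) \<Rightarrow> real \<Rightarrow> 'k" where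
  "Dmod_map v = ext_on a b (nderiv 1 a b (\<lambda>x. v x / f0 x))"

lemma Dmod_eq_image: "Dmod a b f0 U = Dmod_map ` U"
  by (auto simp: Dmod_def Dmod_map_def)

lemma Dmod_map_inside: "x \<in> {a..b} \<Longrightarrow> Dmod_map v x = nderiv 1 a b (\<lambda>x. v x / f0 x) x"
  and Dmod_map_outside: "x \<notin> {a..b} \<Longrightarrow> Dmod_map v x = 0"
  by (auto simp: Dmod_map_def ext_on_def)

lemma Dmod_map_f0: "Dmod_map f0 = (\<lambda>x. 0)"
proof
  fix x
  show "Dmod_map f0 x = 0"
  proof (cases "x \<in> {a..b}")
    case True
    have "nderiv 1 a b (\<lambda>x. f0 x / f0 x) x = nderiv 1 a b (\<lambda>_. 1) x"
      using f0_nonzero True by (intro nderiv_cong) auto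
    also have "\<dots> = 0"
      by (rule nderiv_1_eqI[OF ab True has_vector_derivative_const])
    finally show ?thesis
      using True by (simp add: Dmod_map_inside)
  qed (simp add: Dmod_map_outside)
qed

lemma ratio_at_endpoints:
  assumes "v = (\<lambda>x. \<Sum>k\<le>n. c k * p k x)" "f0 = (\<lambda>x. \<Sum>k\<le>n. \<beta> k * p k x)"
  shows "v a / f0 a = c 0 / \<beta> 0" "v b / f0 b = c n / \<beta> n"
proof -
  have "p 0 a \<noteq> 0" "p n b \<noteq> 0"
    using p_0_at_a p_n_at_b by auto
  then show "v a / f0 a = c 0 / \<beta> 0" "v b / f0 b = c n / \<beta> n"
    using assms lincomb_p_at_a lincomb_p_at_b by simp_all
qed

lemma ratio_endpoints_eq_if_n_0:
  assumes "n = 0" "v \<in> U"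
  shows "v a / f0 a = v b / f0 b"
proof -
  obtain c where c: "v = (\<lambda>x. \<Sum>k\<le>n. c k * p k x)"
    using U_lincomb[OF assms(2)] .
  obtain \<beta> where \<beta>: "f0 = (\<lambda>x. \<Sum>k\<le>n. \<beta> k * p k x)"
    using U_lincomb[OF f0_in] .
  show ?thesis
    using ratio_at_endpoints[OF c \<beta>] assms(1) by simp
qed

lemma interpolation_weights:
  assumes coeffs: "\<forall>k\<le>n. B k > 0 \<and> \<beta> k = of_real (B k) \<and> \<gamma> k = of_real (R k) * \<beta> k"
    and g: "\<forall>x\<in>{a..b}. f1 x / f0 x = of_real (g x)" and t: "\<forall>k\<le>n. t k \<in> {a..b} \<and> g (t k) = R k"
  obtains \<alpha> where "\<forall>k\<le>n. \<alpha> k > 0 \<and> f0 (t k) * of_real (\<alpha> k) = \<beta> k \<and> f1 (t k) * of_real (\<alpha> k) = \<gamma> k"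
proof -
  obtain F where F: "\<forall>x\<in>{a..b}. F x > 0 \<and> f0 x = of_real (F x)"
    using bchoice[OF f0_pos] by blast
  have "\<forall>k\<le>n. B k / F (t k) > 0 \<and> f0 (t k) * of_real (B k / F (t k)) = \<beta> k
      \<and> f1 (t k) * of_real (B k / F (t k)) = \<gamma> k"
  proof (intro allI impI)
    fix k assume "k \<le> n"
    with coeffs t F have k: "B k > 0" "\<beta> k = of_real (B k)" "\<gamma> k = of_real (R k) * \<beta> k"
      "F (t k) > 0" "f0 (t k) = of_real (F (t k))" "f1 (t k) / f0 (t k) = of_real (R k)"
      using g by auto
    moreover have "F (t k) * (B k / F (t k)) = B k"
      using k by simp
    ultimately have f0: "f0 (t k) * of_real (B k / F (t k)) = \<beta> k"
      by (simp only: of_real_mult[symmetric])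
    moreover have "f1 (t k) = of_real (R k) * f0 (t k)"
      using k by (simp add: divide_eq_eq)
    ultimately show "B k / F (t k) > 0 \<and> f0 (t k) * of_real (B k / F (t k)) = \<beta> k
        \<and> f1 (t k) * of_real (B k / F (t k)) = \<gamma> k"
      using k by (simp add: mult.assoc)
  qed
  then show ?thesis
    by (rule that)
qed

end

locale bernstein_setting_Suc = bernstein_setting a b n U p q f0
  for a b :: real and n :: nat and U :: "(real \<Rightarrow> 'k::real_normed_field) set" and p q f0 +
  fixes m :: nat
  assumes n_Suc: "n = Suc m"
begin

lemma quotient_Ck: "v \<in> U \<Longrightarrow> Ck n a b (\<lambda>x. v x / f0 x)"
  using Ck_divide[OF ab U_Ck U_Ck[OF f0_in] f0_nonzero] .

lemma Dmod_map_Ck: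
  assumes "v \<in> U"
  shows "Ck m a b (Dmod_map v)"
proof -
  have "Ck m a b (nderiv 1 a b (\<lambda>x. v x / f0 x))"
    using Ck_SucD(2)[OF quotient_Ck[OF assms, unfolded n_Suc]] .
  moreover have "\<forall>x\<in>{a..b}. nderiv 1 a b (\<lambda>x. v x / f0 x) x = Dmod_map v x"
    by (simp add: Dmod_map_inside)
  ultimately show ?thesis
    using Ck_cong by blast
qed

lemma q_eq_Dmod_map:
  assumes "k \<le> m"
  obtains v where "v \<in> U" "q k = Dmod_map v"
proof -
  have "q k \<in> Dmod_map ` U"
    using assms q_in n_Suc unfolding Dmod_eq_image by simp
  then show ?thesis
    using that by blast
qed

lemma q_Ck: "\<forall>k\<le>m. Ck m a b (q k)"
proof (intro allI impI)
  fix k assume "k \<le> m"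
  then obtain v where "v \<in> U" "q k = Dmod_map v"
    by (rule q_eq_Dmod_map)
  then show "Ck m a b (q k)"
    using Dmod_map_Ck by simp
qed

lemma q_zero_order_a: "\<forall>k\<le>m. zero_order a b (q k) a k"
  and q_zero_order_b: "\<forall>k\<le>m. zero_order a b (q k) b (m - k)"
  using q_bern n_Suc unfolding bernstein_basis_def by auto

lemma q_inj: "inj_on q {..m}"
proof (rule inj_onI)
  fix k l assume "k \<in> {..m}" "l \<in> {..m}" "q k = q l"
  then have "zero_order a b (q k) a k" "zero_order a b (q k) a l"
    using q_zero_order_a by auto
  then show "k = l"
    by (rule zero_order_unique)
qed

lemma q_lincomb_eq_zero: "\<forall>x\<in>{a..b}. (\<Sum>k\<le>m. u k * q k x) = 0 \<Longrightarrow> \<forall>k\<le>m. u k = 0"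
  using lincomb_eq_zero_zero_orders[OF ab q_Ck, of a "\<lambda>k. k"] q_zero_order_a ab by auto

lemma Dmod_map_lincomb:
  "Dmod_map (\<lambda>x. \<Sum>k\<le>n. c k * p k x) = (\<lambda>x. \<Sum>k\<le>n. c k * Dmod_map (p k) x)"
proof
  fix x
  show "Dmod_map (\<lambda>x. \<Sum>k\<le>n. c k * p k x) x = (\<Sum>k\<le>n. c k * Dmod_map (p k) x)"
  proof (cases "x \<in> {a..b}")
    case True
    have "nderiv 1 a b (\<lambda>x. (\<Sum>k\<le>n. c k * p k x) / f0 x) x = nderiv 1 a b (\<lambda>x. \<Sum>k\<le>n. c k * (p k x / f0 x)) x"
      using True by (intro nderiv_cong) (auto simp: sum_divide_distrib)
    also have "\<dots> = (\<Sum>k\<le>n. c k * nderiv 1 a b (\<lambda>x. p k x / f0 x) x)"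
      using True quotient_Ck p_in n_Suc by (intro nderiv_lincomb[OF ab]) auto
    finally show ?thesis
      using True by (simp add: Dmod_map_inside)
  qed (simp add: Dmod_map_outside)
qed

lemma Dmod_map_p_in_span_q: "k \<le> n \<Longrightarrow> Dmod_map (p k) \<in> fscale.span (q ` {..m})"
proof -
  define W where "W = (\<lambda>k. Dmod_map (p (Suc k))) ` {..m}"
  obtain \<beta> where \<beta>: "f0 = (\<lambda>x. \<Sum>k\<le>n. \<beta> k * p k x)"
    using U_lincomb[OF f0_in] .
  have "\<beta> 0 \<noteq> 0"
    using f0_coeff_0_pos[OF \<beta>] by auto
  text \<open>Since \<open>D f0 = 0\<close> and \<open>\<beta> 0 \<noteq> 0\<close>, the image of \<open>p 0\<close> is a combination of the others.\<close>
  have D0: "Dmod_map (p 0) = (\<lambda>x. \<Sum>k\<le>m. (- \<beta> (Suc k) / \<beta> 0) * Dmod_map (p (Suc k)) x)"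
  proof
    fix x
    have "(\<Sum>k\<le>n. \<beta> k * Dmod_map (p k) x) = 0"
      using fun_cong[OF Dmod_map_lincomb[of \<beta>, folded \<beta>], of x] Dmod_map_f0 by simp
    then have "\<beta> 0 * Dmod_map (p 0) x + (\<Sum>k\<le>m. \<beta> (Suc k) * Dmod_map (p (Suc k)) x) = 0"
      unfolding n_Suc sum.atMost_Suc_shift .
    then have "\<beta> 0 * Dmod_map (p 0) x = - (\<Sum>k\<le>m. \<beta> (Suc k) * Dmod_map (p (Suc k)) x)"
      by (simp add: eq_neg_iff_add_eq_0)
    then have "Dmod_map (p 0) x = - (\<Sum>k\<le>m. \<beta> (Suc k) * Dmod_map (p (Suc k)) x) / \<beta> 0"
      using \<open>\<beta> 0 \<noteq> 0\<close> by (metis nonzero_mult_div_cancel_left)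
    then show "Dmod_map (p 0) x = (\<Sum>k\<le>m. (- \<beta> (Suc k) / \<beta> 0) * Dmod_map (p (Suc k)) x)"
      by (simp add: sum_divide_distrib sum_negf)
  qed
  have "Dmod_map (p 0) \<in> fscale.span W"
    unfolding D0 W_def by (rule lincomb_in_fscale_span)
  then have D_span: "Dmod_map (p k) \<in> fscale.span W" if "k \<le> n" for k
    using that n_Suc by (cases k) (auto simp: W_def intro: fscale.span_base)
  have "q ` {..m} \<subseteq> fscale.span W"
  proof
    fix z assume "z \<in> q ` {..m}"
    then obtain j where "j \<le> m" "z = q j"
      by blast
    moreover obtain v where "v \<in> U" "q j = Dmod_map v"
      using q_eq_Dmod_map[OF \<open>j \<le> m\<close>] .
    moreover obtain c where "v = (\<lambda>x. \<Sum>k\<le>n. c k * p k x)"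
      using U_lincomb[OF \<open>v \<in> U\<close>] .
    ultimately have z: "z = (\<Sum>k\<le>n. fscale (c k) (Dmod_map (p k)))"
      by (simp add: Dmod_map_lincomb fscale_sum)
    show "z \<in> fscale.span W"
      unfolding z by (rule fscale.span_sum, rule fscale.span_scale, rule D_span) simp
  qed
  moreover have "fscale.independent (q ` {..m})"
    using q_lincomb_eq_zero by (intro fscale_independent_image[OF q_inj finite_atMost]) (simp add: fun_eq_iff)
  moreover have "card W \<le> card (q ` {..m})"
    unfolding W_def card_image[OF q_inj] using card_image_le[of "{..m}"] by simp
  moreover have "finite W"
    by (simp add: W_def)
  ultimately have "W \<subseteq> fscale.span (q ` {..m})"
    using fscale.subset_span_if_independent_card_ge by blast
  then have "fscale.span W \<subseteq> fscale.span (q ` {..m})"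
    by (rule fscale.span_minimal[OF _ fscale.subspace_span])
  with D_span show "k \<le> n \<Longrightarrow> Dmod_map (p k) \<in> fscale.span (q ` {..m})"
    by blast
qed

definition Dmod_matrix :: "nat \<Rightarrow> nat \<Rightarrow> 'k" where
  "Dmod_matrix = (SOME e. \<forall>k\<le>n. Dmod_map (p k) = (\<lambda>x. \<Sum>j\<le>m. e k j * q j x))"

lemma Dmod_map_p_expansion:
  "k \<le> n \<Longrightarrow> Dmod_map (p k) = (\<lambda>x. \<Sum>j\<le>m. Dmod_matrix k j * q j x)"
proof -
  have "\<exists>c. Dmod_map (p k) = (\<lambda>x. \<Sum>j\<le>m. c j * q j x)" if "k \<le> n" for k
    using fscale_span_image_lincomb[OF q_inj finite_atMost Dmod_map_p_in_span_q[OF that]] by metis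
  then have "\<exists>e. \<forall>k\<le>n. Dmod_map (p k) = (\<lambda>x. \<Sum>j\<le>m. e k j * q j x)"
    by metis
  then show "k \<le> n \<Longrightarrow> Dmod_map (p k) = (\<lambda>x. \<Sum>j\<le>m. Dmod_matrix k j * q j x)"
    unfolding Dmod_matrix_def by (rule someI2_ex) blast
qed

lemma Dmod_map_p_nderiv:
  assumes "k \<le> n" "c \<in> {a..b}"
  shows "nderiv i a b (\<lambda>x. \<Sum>j\<le>m. Dmod_matrix k j * q j x) c
    = nderiv (Suc i) a b (\<lambda>x. p k x * inverse (f0 x)) c"
proof -
  have "\<forall>x\<in>{a..b}. (\<Sum>j\<le>m. Dmod_matrix k j * q j x) = nderiv 1 a b (\<lambda>x. p k x * inverse (f0 x)) x"
  proof
    fix x assume "x \<in> {a..b}"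
    have "(\<Sum>j\<le>m. Dmod_matrix k j * q j x) = Dmod_map (p k) x"
      using Dmod_map_p_expansion[OF assms(1)] by simp
    also have "\<dots> = nderiv 1 a b (\<lambda>x. p k x / f0 x) x"
      by (rule Dmod_map_inside[OF \<open>x \<in> {a..b}\<close>])
    finally show "(\<Sum>j\<le>m. Dmod_matrix k j * q j x) = nderiv 1 a b (\<lambda>x. p k x * inverse (f0 x)) x"
      by (simp add: divide_inverse)
  qed
  then show ?thesis
    unfolding nderiv_Suc_inner using assms(2) by (rule nderiv_cong)
qed

lemma p_quotient_at_a:
  "k \<le> n \<Longrightarrow> (\<forall>i<k. nderiv i a b (\<lambda>x. p k x * inverse (f0 x)) a = 0) \<and>
    nderiv k a b (\<lambda>x. p k x * inverse (f0 x)) a = nderiv k a b (p k) a * inverse (f0 a)"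
  using nderiv_mult_at_zero[OF ab _ Ck_inverse[OF ab U_Ck[OF f0_in] f0_nonzero]] p_Ck p_zero_order_a ab
  by (simp add: zero_order_def)

lemma p_quotient_at_b:
  "k \<le> n \<Longrightarrow> (\<forall>i<n - k. nderiv i a b (\<lambda>x. p k x * inverse (f0 x)) b = 0) \<and>
    nderiv (n - k) a b (\<lambda>x. p k x * inverse (f0 x)) b = nderiv (n - k) a b (p k) b * inverse (f0 b)"
  using nderiv_mult_at_zero[OF ab _ Ck_inverse[OF ab U_Ck[OF f0_in] f0_nonzero]] p_Ck p_zero_order_b ab
  by (simp add: zero_order_def)

lemma inj_on_reverse: "inj_on (\<lambda>j. m - j) {..m}"
  by (auto simp: inj_on_def)

lemma Dmod_matrix_bidiagonal:
  assumes "k \<le> n" "j \<le> m" "j \<noteq> k" "Suc j \<noteq> k"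
  shows "Dmod_matrix k j = 0"
proof (cases "j < k")
  case True
  have "\<forall>i<k - 1. nderiv i a b (\<lambda>x. \<Sum>j\<le>m. Dmod_matrix k j * q j x) a = 0"
    using Dmod_map_p_nderiv[OF assms(1)] p_quotient_at_a[OF assms(1)] ab by auto
  then have "\<forall>j\<le>m. j < k - 1 \<longrightarrow> Dmod_matrix k j = 0"
    using lincomb_coeffs_vanish_zero_orders[OF ab q_Ck, of a "\<lambda>j. j"] q_zero_order_a ab by auto
  with True assms show ?thesis
    by simp
next
  case False
  have "\<forall>i<m - k. nderiv i a b (\<lambda>x. \<Sum>j\<le>m. Dmod_matrix k j * q j x) b = 0"
    using Dmod_map_p_nderiv[OF assms(1)] p_quotient_at_b[OF assms(1)] ab n_Suc by auto
  then have "\<forall>j\<le>m. m - j < m - k \<longrightarrow> Dmod_matrix k j = 0"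
    using lincomb_coeffs_vanish_zero_orders[OF ab q_Ck q_zero_order_b inj_on_reverse] ab by auto
  with False assms show ?thesis
    by simp
qed

lemma p_nonneg_at: "k \<le> n \<Longrightarrow> \<forall>y\<in>{a..b}. \<exists>r::real. r \<ge> 0 \<and> p k y = of_real r"
  using p_nonneg by (simp add: nonneg_system_def)

lemma q_nonneg_at: "k \<le> m \<Longrightarrow> \<forall>y\<in>{a..b}. \<exists>r::real. r \<ge> 0 \<and> q k y = of_real r"
  using q_nonneg n_Suc by (simp add: nonneg_system_def)

lemma p_nderiv_at_a: "k \<le> n \<Longrightarrow> \<exists>P>0. nderiv k a b (p k) a = of_real P"
  by (rule nderiv_pos_at_left[OF ab Ck_mono[OF p_Ck[rule_format]] p_nonneg_at p_zero_order_a[rule_format]])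

lemma p_nderiv_at_b: "k \<le> n \<Longrightarrow> \<exists>P>0. nderiv (n - k) a b (p k) b = (-1) ^ (n - k) * of_real P"
  by (rule nderiv_sign_at_right[OF ab Ck_mono[OF p_Ck[rule_format]] p_nonneg_at p_zero_order_b[rule_format]])
    simp_all

lemma q_nderiv_at_a: "k \<le> m \<Longrightarrow> \<exists>Q>0. nderiv k a b (q k) a = of_real Q"
  by (rule nderiv_pos_at_left[OF ab Ck_mono[OF q_Ck[rule_format]] q_nonneg_at q_zero_order_a[rule_format]])

lemma q_nderiv_at_b: "k \<le> m \<Longrightarrow> \<exists>Q>0. nderiv (m - k) a b (q k) b = (-1) ^ (m - k) * of_real Q"
  by (rule nderiv_sign_at_right[OF ab Ck_mono[OF q_Ck[rule_format]] q_nonneg_at q_zero_order_b[rule_format]])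
    simp_all

lemma f0_at: "c \<in> {a..b} \<Longrightarrow> \<exists>F>0. f0 c = of_real F"
  using f0_pos by blast

lemma Dmod_matrix_subdiagonal_pos:
  assumes "j \<le> m"
  shows "\<exists>C>0. Dmod_matrix (Suc j) j = of_real C"
proof -
  have k: "Suc j \<le> n"
    using assms n_Suc by simp
  obtain P Q F where PQF: "P > 0" "nderiv (Suc j) a b (p (Suc j)) a = of_real P"
    "Q > 0" "nderiv j a b (q j) a = of_real Q" "F > 0" "f0 a = of_real F"
    using p_nderiv_at_a[OF k] q_nderiv_at_a[OF assms] f0_at[of a] ab by auto
  have "Dmod_matrix (Suc j) j * nderiv j a b (q j) a
      = nderiv j a b (\<lambda>x. \<Sum>i\<le>m. Dmod_matrix (Suc j) i * q i x) a"
    using nderiv_lincomb_zero_orders[OF ab q_Ck, of "\<lambda>i. i" a j "Dmod_matrix (Suc j)"]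
      q_zero_order_a assms ab Dmod_matrix_bidiagonal[OF k]
    by (auto simp: zero_order_def)
  also have "\<dots> = nderiv (Suc j) a b (p (Suc j)) a * inverse (f0 a)"
    using Dmod_map_p_nderiv[OF k] p_quotient_at_a[OF k] ab by simp
  finally have "Dmod_matrix (Suc j) j = of_real (P / (F * Q))"
    using PQF by (simp add: field_simps)
  with PQF show ?thesis
    by (intro exI[of _ "P / (F * Q)"]) simp
qed

lemma Dmod_matrix_diagonal_neg:
  assumes "j \<le> m"
  shows "\<exists>D<0. Dmod_matrix j j = of_real D"
proof -
  have k: "j \<le> n" and nj: "n - j = Suc (m - j)"
    using assms n_Suc by auto
  obtain P Q F where PQF: "P > 0" "nderiv (n - j) a b (p j) b = (-1) ^ (n - j) * of_real P"
    "Q > 0" "nderiv (m - j) a b (q j) b = (-1) ^ (m - j) * of_real Q" "F > 0" "f0 b = of_real F"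
    using p_nderiv_at_b[OF k] q_nderiv_at_b[OF assms] f0_at[of b] ab by auto
  have "\<forall>i\<le>m. i \<noteq> j \<and> m - i \<le> m - j \<longrightarrow> Dmod_matrix j i = 0"
    using Dmod_matrix_bidiagonal[OF k] assms by auto
  then have "Dmod_matrix j j * nderiv (m - j) a b (q j) b
      = nderiv (m - j) a b (\<lambda>x. \<Sum>i\<le>m. Dmod_matrix j i * q i x) b"
    using nderiv_lincomb_zero_orders[OF ab q_Ck, of "\<lambda>i. m - i" b j "Dmod_matrix j"]
      q_zero_order_b assms ab by (auto simp: zero_order_def)
  also have "\<dots> = nderiv (n - j) a b (p j) b * inverse (f0 b)"
    using Dmod_map_p_nderiv[OF k] p_quotient_at_b[OF k] ab nj by simp
  finally have "(-1) ^ (m - j) * (Dmod_matrix j j * of_real Q)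
      = (-1) ^ (m - j) * (- of_real P * inverse (of_real F))"
    using PQF nj by (simp add: algebra_simps)
  from arg_cong[where f="\<lambda>z. (-1) ^ (m - j) * z", OF this]
  have "Dmod_matrix j j * of_real Q = - of_real P * inverse (of_real F)"
    by simp
  then have "Dmod_matrix j j = of_real (- (P / (F * Q)))"
    using PQF by (simp add: field_simps)
  with PQF show ?thesis
    by (intro exI[of _ "- (P / (F * Q))"]) simp
qed

lemma Dmod_matrix_coeff_eq:
  assumes v: "v = (\<lambda>x. \<Sum>k\<le>n. c k * p k x)" and d: "\<forall>x\<in>{a..b}. Dmod_map v x = (\<Sum>i\<le>m. d i * q i x)"
    and j: "j \<le> m"
  shows "c j * Dmod_matrix j j + c (Suc j) * Dmod_matrix (Suc j) j = d j"
proof -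
  have "Dmod_map v x = (\<Sum>i\<le>m. (\<Sum>k\<le>n. c k * Dmod_matrix k i) * q i x)" for x
  proof -
    have "Dmod_map v x = (\<Sum>k\<le>n. c k * (\<Sum>i\<le>m. Dmod_matrix k i * q i x))"
      unfolding v Dmod_map_lincomb using Dmod_map_p_expansion by simp
    also have "\<dots> = (\<Sum>i\<le>m. (\<Sum>k\<le>n. c k * Dmod_matrix k i) * q i x)"
      by (simp add: sum_distrib_left sum_distrib_right mult.assoc sum.swap[of _ "{..n}"])
    finally show ?thesis .
  qed
  with d have "\<forall>x\<in>{a..b}. (\<Sum>i\<le>m. ((\<Sum>k\<le>n. c k * Dmod_matrix k i) - d i) * q i x) = 0"
    by (simp add: left_diff_distrib sum_subtractf)
  from q_lincomb_eq_zero[OF this] j have "(\<Sum>k\<le>n. c k * Dmod_matrix k j) - d j = 0"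
    by blast
  then have "(\<Sum>k\<le>n. c k * Dmod_matrix k j) = d j"
    by simp
  moreover have "(\<Sum>k\<le>n. c k * Dmod_matrix k j) = (\<Sum>k\<in>{j, Suc j}. c k * Dmod_matrix k j)"
    using j n_Suc Dmod_matrix_bidiagonal by (intro sum.mono_neutral_right) auto
  ultimately show ?thesis
    by simp
qed


theorem interpolating_nodes_exist:
  assumes f1_in: "f1 \<in> U" and g: "\<forall>x\<in>{a..b}. f1 x / f0 x = of_real (g x)"
    and w_def: "\<forall>x\<in>{a..b}. nderiv 1 a b (\<lambda>y. f1 y / f0 y) x = (\<Sum>k<n. w k * q k x)"
    and w_nonneg: "\<forall>k<n. \<exists>r::real. r \<ge> 0 \<and> w k = of_real r"
  shows "\<exists>(t::nat \<Rightarrow> real) (\<alpha>::nat \<Rightarrow> real).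
           t 0 = a \<and> t n = b \<and> (\<forall>k\<le>n. t k \<in> {a..b}) \<and> (\<forall>k\<le>n. \<alpha> k > 0) \<and>
           (let B = (\<lambda>f::real \<Rightarrow> 'k. \<lambda>x. \<Sum>k\<le>n. f (t k) * of_real (\<alpha> k) * p k x)
            in (\<forall>x\<in>{a..b}. B f0 x = f0 x) \<and> (\<forall>x\<in>{a..b}. B f1 x = f1 x))"
proof -
  obtain \<beta> where \<beta>: "f0 = (\<lambda>x. \<Sum>k\<le>n. \<beta> k * p k x)"
    using U_lincomb[OF f0_in] .
  obtain \<gamma> where \<gamma>: "f1 = (\<lambda>x. \<Sum>k\<le>n. \<gamma> k * p k x)"
    using U_lincomb[OF f1_in] .
  obtain B0 where B0: "B0 > 0" "\<beta> 0 = of_real B0"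
    using f0_coeff_0_pos[OF \<beta>] by blast
  have "\<forall>j\<in>{..<n}. \<exists>r. (r > 0 \<and> Dmod_matrix (Suc j) j = of_real r)"
    using Dmod_matrix_subdiagonal_pos n_Suc by auto
  from bchoice[OF this] obtain C where "\<forall>j\<in>{..<n}. C j > 0 \<and> Dmod_matrix (Suc j) j = of_real (C j)" ..
  then have C: "\<forall>j<n. C j > 0 \<and> Dmod_matrix (Suc j) j = of_real (C j)"
    by simp
  have "\<forall>j\<in>{..<n}. \<exists>r. (r < 0 \<and> Dmod_matrix j j = of_real r)"
    using Dmod_matrix_diagonal_neg n_Suc by auto
  from bchoice[OF this] obtain D where "\<forall>j\<in>{..<n}. D j < 0 \<and> Dmod_matrix j j = of_real (D j)" ..
  then have D: "\<forall>j<n. D j < 0 \<and> Dmod_matrix j j = of_real (D j)"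
    by simp
  have "\<forall>j\<in>{..<n}. \<exists>r. (r \<ge> 0 \<and> w j = of_real r)"
    using w_nonneg by auto
  from bchoice[OF this] obtain W where "\<forall>j\<in>{..<n}. W j \<ge> 0 \<and> w j = of_real (W j)" ..
  then have W: "\<forall>j<n. W j \<ge> 0 \<and> w j = of_real (W j)"
    by simp
  have eq\<beta>: "\<forall>j<n. \<beta> j * of_real (D j) + \<beta> (Suc j) * of_real (C j) = 0"
    using Dmod_matrix_coeff_eq[OF \<beta>, of "\<lambda>_. 0"] Dmod_map_f0 C D n_Suc by simp
  have eq\<gamma>: "\<forall>j<n. \<gamma> j * of_real (D j) + \<gamma> (Suc j) * of_real (C j) = of_real (W j)"
    using Dmod_matrix_coeff_eq[OF \<gamma>, of w] Dmod_map_inside w_def C D W n_Suc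
    by (simp add: lessThan_Suc_atMost)
  have signs: "\<forall>j<n. C j > 0 \<and> D j < 0 \<and> W j \<ge> 0"
    using C D W by simp
  have \<gamma>0: "\<gamma> 0 = of_real (g a) * \<beta> 0"
    using ratio_at_endpoints(1)[OF \<gamma> \<beta>] g ab B0 by (simp add: divide_eq_eq)
  then have "\<gamma> 0 \<in> \<real>"
    using B0 by simp
  from bidiagonal_solution_ratios_nondecreasing[OF eq\<beta> eq\<gamma> signs B0(2,1) this]
  obtain B R where BR: "\<forall>k\<le>n. B k > 0 \<and> \<beta> k = of_real (B k) \<and> \<gamma> k = of_real (R k) * \<beta> k"
    and R_mono: "\<forall>k<n. R k \<le> R (Suc k)" .
  have "\<beta> 0 \<noteq> 0" "\<beta> n \<noteq> 0"
    using BR by auto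
  then have "R 0 = g a"
    using BR \<gamma>0 by simp
  moreover have "R n = g b"
    using ratio_at_endpoints(2)[OF \<gamma> \<beta>] g BR ab \<open>\<beta> n \<noteq> 0\<close> by simp
  moreover have "continuous_on {a..b} g"
  proof -
    have "continuous_on {a..b} (\<lambda>x. f1 x / f0 x)"
      using Ck_mono[OF quotient_Ck[OF f1_in], of 0] by (simp add: Ck_0)
    then have "continuous_on {a..b} (\<lambda>x. of_real (g x) :: 'k)"
      using g by (auto intro: continuous_on_cong[THEN iffD1, OF refl, rotated])
    then show ?thesis
      unfolding continuous_on_iff dist_of_real .
  qed
  ultimately obtain t where t: "t 0 = a" "t n = b" "\<forall>k\<le>n. t k \<in> {a..b} \<and> g (t k) = R k"
    using interpolation_nodes_exist[of a b g n R] ab n_Suc R_mono by auto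
  obtain \<alpha> where \<alpha>: "\<forall>k\<le>n. \<alpha> k > 0 \<and> f0 (t k) * of_real (\<alpha> k) = \<beta> k \<and> f1 (t k) * of_real (\<alpha> k) = \<gamma> k"
    using interpolation_weights[OF BR g t(3)] .
  have "(\<Sum>k\<le>n. f0 (t k) * of_real (\<alpha> k) * p k x) = f0 x" "(\<Sum>k\<le>n. f1 (t k) * of_real (\<alpha> k) * p k x) = f1 x" for x
    using \<alpha> by (simp_all add: \<beta> \<gamma>)
  with t \<alpha> show ?thesis
    by (intro exI[of _ t] exI[of _ \<alpha>]) (simp add: Let_def)
qed

end

theorem theorem1:
  fixes a b :: real and n :: nat
    and U :: "(real \<Rightarrow> 'k::real_normed_field) set"
    and p q :: "nat \<Rightarrow> real \<Rightarrow> 'k"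
    and f0 f1 :: "real \<Rightarrow> 'k"
    and w :: "nat \<Rightarrow> 'k"
  assumes ab: "a < b"
    and U_sub: "module.subspace fscale U" and U_Cn: "U \<subseteq> Cn n a b"
    and U_dim: "vector_space.dim fscale U = n + 1"
    and p_in: "\<forall>k\<le>n. p k \<in> U"
    and p_bern: "bernstein_basis a b n p" and p_nonneg: "nonneg_system a b n p"
    and f0_in: "f0 \<in> U" and f0_pos: "\<forall>x\<in>{a..b}. \<exists>r::real. r > 0 \<and> f0 x = of_real r"
    and f1_in: "f1 \<in> U"
    and f1_incr: "\<exists>g::real \<Rightarrow> real. (\<forall>x\<in>{a..b}. f1 x / f0 x = of_real (g x)) \<and> strict_mono_on {a..b} g"
    and q_in: "\<forall>k<n. q k \<in> Dmod a b f0 U"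
    and q_bern: "bernstein_basis a b (n - 1) q" and q_nonneg: "nonneg_system a b (n - 1) q"
    and w_def: "\<forall>x\<in>{a..b}. nderiv 1 a b (\<lambda>y. f1 y / f0 y) x = (\<Sum>k<n. w k * q k x)"
    and w_nonneg: "\<forall>k<n. \<exists>r::real. r \<ge> 0 \<and> w k = of_real r"
  shows "\<exists>(t::nat \<Rightarrow> real) (\<alpha>::nat \<Rightarrow> real).
           t 0 = a \<and> t n = b \<and> (\<forall>k\<le>n. t k \<in> {a..b}) \<and> (\<forall>k\<le>n. \<alpha> k > 0) \<and>
           (let B = (\<lambda>f::real \<Rightarrow> 'k. \<lambda>x. \<Sum>k\<le>n. f (t k) * of_real (\<alpha> k) * p k x)
            in (\<forall>x\<in>{a..b}. B f0 x = f0 x) \<and> (\<forall>x\<in>{a..b}. B f1 x = f1 x))"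
proof -
  interpret bernstein_setting a b n U p q f0
    by unfold_locales (fact assms)+
  obtain g where g: "\<forall>x\<in>{a..b}. f1 x / f0 x = of_real (g x)" and "strict_mono_on {a..b} g"
    using f1_incr by blast
  then have "g a < g b"
    using ab by (auto intro: strict_mono_onD)
  show ?thesis
  proof (cases n)
    case 0
    with g ab have "g a = g b"
      using ratio_endpoints_eq_if_n_0[OF _ f1_in] by simp
    with \<open>g a < g b\<close> show ?thesis
      by simp
  next
    case (Suc m)
    interpret bernstein_setting_Suc a b n U p q f0 m
      by unfold_locales (rule Suc)
    show ?thesis
      by (rule interpolating_nodes_exist[OF f1_in g w_def w_nonneg])
  qed
qed

end
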